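(* (i) If for some $m\ge0$ every solution of the expanded equation $z_{n+1}=\sum_{j=0}^{k-1}b_{m,j}z_{n-m-j}$ converges to $0$, then every solution of $x_{n+1}=\sum_{j=0}^{k-1}a_jx_{n-j}$ converges to $0$. (ii) If every solution of $x_{n+1}=\sum_{j=0}^{k-1}a_jx_{n-j}$ converges to $0$ and, for some $m\ge 0$, all zeros of $q_m$ lie in the open unit disk $\mathbb{D}=\{z\in\mathbb{C}:|z|<1\}$, then every solution of $z_{n+1}=\sum_{j=0}^{k-1}b_{m,j}z_{n-m-j}$ converges to $0$.
   Context: Let $k\ge 2$, $a_0,\dots,a_{k-1}\in\mathbb{R}$, $a_0\ne0$. Define $b_{0,j}=a_j$ ($0\le j\le k-1$) and for $m\ge0$: $b_{m+1,j}=a_jb_{m,0}+b_{m,j+1}$ ($0\le j\le k-2$), $b_{m+1,k-1}=a_{k-1}b_{m,0}$. The equation $z_{n+1}=\sum_{j=0}^{k-1}b_{m,j}z_{n-m-j}$ (with $m+k$ arbitrary real initial values) is the $m$-times expanded equation. $q_m(x)=x^m+\sum_{i=0}^{m-1}b_{i,0}x^{m-i-1}$, with $q_0\equiv 1$. (Every solution converging to $0$ is equivalent to all zeros of the corresponding characteristic polynomial lying in $\mathbb{D}$.) *)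

theory Defs
  imports Complex_Main
begin

text \<open>Coefficients b_{m,j} of the m-times expanded equation (only 0 <= j <= k-1 is meaningful).\<close>
fun bcoef :: "(nat \<Rightarrow> real) \<Rightarrow> nat \<Rightarrow> nat \<Rightarrow> nat \<Rightarrow> real" where
  "bcoef a k 0 j = a j"
| "bcoef a k (Suc m) j =
     (if j + 1 < k then a j * bcoef a k m 0 + bcoef a k m (j + 1)
      else a (k - 1) * bcoef a k m 0)"

text \<open>x solves x_{n+1} = sum_{j<k} a_j x_{n-j}; indices shifted so the k initial values are x 0..x (k-1).\<close>
definition is_sol :: "(nat \<Rightarrow> real) \<Rightarrow> nat \<Rightarrow> (nat \<Rightarrow> real) \<Rightarrow> bool" where
  "is_sol a k x \<longleftrightarrow> (\<forall>n. x (n + k) = (\<Sum>j<k. a j * x (n + k - 1 - j)))"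

text \<open>z solves z_{n+1} = sum_{j<k} b_{m,j} z_{n-m-j}; m+k initial values z 0..z (m+k-1).\<close>
definition is_exp_sol :: "(nat \<Rightarrow> real) \<Rightarrow> nat \<Rightarrow> nat \<Rightarrow> (nat \<Rightarrow> real) \<Rightarrow> bool" where
  "is_exp_sol a k m z \<longleftrightarrow>
     (\<forall>n. z (n + m + k) = (\<Sum>j<k. bcoef a k m j * z (n + m + k - 1 - m - j)))"

definition qpoly :: "(nat \<Rightarrow> real) \<Rightarrow> nat \<Rightarrow> nat \<Rightarrow> complex \<Rightarrow> complex" where
  "qpoly a k m z = z ^ m + (\<Sum>i<m. complex_of_real (bcoef a k i 0) * z ^ (m - i - 1))"

end

theory Submission
  imports Defs "HOL-Computational_Algebra.Fundamental_Theorem_Algebra"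
begin

text \<open>
  Let S be the forward shift, (S u) n = u (n + 1). A sequence solves the m-times expanded
  equation iff it is annihilated by E_m(S), where E_m(x) = x^(m+k) - \<Sum>_j b_{m,j} x^(k-1-j).
  The recursion defining b_{m,j} says exactly that E_(m+1) = x E_m + b_{m,0} E_0, hence
  E_m = E_0 q_m. So E_0(S) x = 0 implies E_m(S) x = 0, which is (i).
  For (ii), if r is a root of E_0 then Re r^n and Im r^n solve the original equation, so
  decay of all its solutions forces |r| < 1; hence all roots of E_m = E_0 q_m lie in the unit
  disk. Factoring E_m(S) into first-order operators S - r with |r| < 1 and peeling them off
  one at a time shows that every sequence annihilated by E_m(S) tends to 0.
\<close>

(* poly_shift Q u is Q(S) u. *)
definition poly_shift :: "'a::comm_ring_1 poly \<Rightarrow> (nat \<Rightarrow> 'a) \<Rightarrow> nat \<Rightarrow> 'a" where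
  "poly_shift Q u n = (\<Sum>i\<le>degree Q. coeff Q i * u (n + i))"

lemma poly_shift_eq_sum:
  assumes "degree Q \<le> N"
  shows "poly_shift Q u n = (\<Sum>i\<le>N. coeff Q i * u (n + i))"
  unfolding poly_shift_def
  by (rule sum.mono_neutral_left) (use assms in \<open>auto simp: coeff_eq_0\<close>)

lemma poly_shift_0 [simp]: "poly_shift 0 u n = 0"
  by (simp add: poly_shift_def)

lemma poly_shift_zero_sequence [simp]: "poly_shift Q (\<lambda>_. 0) n = 0"
  by (simp add: poly_shift_def)

lemma poly_shift_pCons: "poly_shift (pCons c Q) u n = c * u n + poly_shift Q u (Suc n)"
proof -
  have "poly_shift (pCons c Q) u n = (\<Sum>i\<le>Suc (degree Q). coeff (pCons c Q) i * u (n + i))"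
    by (rule poly_shift_eq_sum) (rule degree_pCons_le)
  also have "\<dots> = c * u n + (\<Sum>i\<le>degree Q. coeff Q i * u (Suc n + i))"
    by (subst sum.atMost_Suc_shift) simp
  finally show ?thesis
    by (simp add: poly_shift_def)
qed

lemma poly_shift_add: "poly_shift (P + Q) u n = poly_shift P u n + poly_shift Q u n"
  by (induction P Q arbitrary: n rule: poly_induct2) (simp_all add: poly_shift_pCons algebra_simps)

lemma poly_shift_diff: "poly_shift (P - Q) u n = poly_shift P u n - poly_shift Q u n"
  by (induction P Q arbitrary: n rule: poly_induct2) (simp_all add: poly_shift_pCons algebra_simps)

lemma poly_shift_smult: "poly_shift (smult c Q) u n = c * poly_shift Q u n"
  by (induction Q arbitrary: n) (simp_all add: poly_shift_pCons algebra_simps)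

lemma poly_shift_sum: "poly_shift (\<Sum>i\<in>A. Q i) u n = (\<Sum>i\<in>A. poly_shift (Q i) u n)"
  by (induction A rule: infinite_finite_induct) (simp_all add: poly_shift_add)

lemma poly_shift_monom: "poly_shift (monom c i) u n = c * u (n + i)"
  by (induction i arbitrary: n) (simp_all add: monom_0 monom_Suc poly_shift_pCons)

lemma poly_shift_mult: "poly_shift (P * Q) u = poly_shift P (poly_shift Q u)"
  by (induction P) (simp_all add: fun_eq_iff poly_shift_pCons poly_shift_add poly_shift_smult)

lemma poly_shift_geometric: "poly_shift Q (\<lambda>i. r ^ i) n = r ^ n * poly Q r"
  by (induction Q arbitrary: n) (simp_all add: poly_shift_pCons algebra_simps)

lemma first_order_recurrence_tendsto_zero:
  fixes v :: "nat \<Rightarrow> 'a::real_normed_div_algebra"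
  assumes r: "norm r < 1" and residual: "(\<lambda>n. v (Suc n) - r * v n) \<longlonglongrightarrow> 0"
  shows "v \<longlonglongrightarrow> 0"
proof (rule LIMSEQ_I)
  fix e :: real
  assume "e > 0"
  define \<rho> where "\<rho> = norm r"
  have \<rho>: "0 \<le> \<rho>" "\<rho> < 1"
    using r by (auto simp: \<rho>_def)
  with \<open>e > 0\<close> have "e / 2 * (1 - \<rho>) > 0"
    by simp
  from LIMSEQ_D[OF residual this] obtain N
    where N: "\<And>n. n \<ge> N \<Longrightarrow> norm (v (Suc n) - r * v n) < e / 2 * (1 - \<rho>)"
    by auto
  define g where "g n = norm (v n) - e / 2" for n
  have contract: "g (Suc n) \<le> \<rho> * g n" if "n \<ge> N" for n
  proof -
    have "norm (v (Suc n)) \<le> norm (r * v n) + norm (v (Suc n) - r * v n)"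
      by (rule norm_triangle_sub)
    also have "\<dots> \<le> \<rho> * norm (v n) + e / 2 * (1 - \<rho>)"
      using N[OF that] by (simp add: \<rho>_def norm_mult)
    finally show ?thesis
      by (simp add: g_def field_simps)
  qed
  have decay: "g (N + j) \<le> \<rho> ^ j * \<bar>g N\<bar>" for j
  proof (induction j)
    case (Suc j)
    have "g (N + Suc j) \<le> \<rho> * g (N + j)"
      using contract[of "N + j"] by simp
    also have "\<dots> \<le> \<rho> * (\<rho> ^ j * \<bar>g N\<bar>)"
      using Suc \<rho> by (simp add: mult_left_mono)
    finally show ?case
      by simp
  qed simp
  have "(\<lambda>j. \<rho> ^ j * \<bar>g N\<bar>) \<longlonglongrightarrow> 0"
    using \<rho> by (intro tendsto_mult_left_zero LIMSEQ_power_zero) simp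
  from LIMSEQ_D[OF this, of "e / 2"] \<open>e > 0\<close> obtain J
    where J: "\<And>j. j \<ge> J \<Longrightarrow> \<rho> ^ j * \<bar>g N\<bar> < e / 2"
    by fastforce
  have small: "norm (v (N + j)) < e" if "j \<ge> J" for j
    using decay[of j] J[OF that] by (simp add: g_def)
  show "\<exists>n0. \<forall>n\<ge>n0. norm (v n - 0) < e"
  proof (intro exI allI impI)
    fix n
    assume "n \<ge> N + J"
    then have "n = N + (n - N)" "n - N \<ge> J"
      by auto
    then show "norm (v n - 0) < e"
      using small by (metis diff_zero)
  qed
qed

lemma tendsto_zero_if_poly_shift_tendsto_zero:
  fixes Q :: "complex poly"
  assumes "Q \<noteq> 0" and "\<And>w. poly Q w = 0 \<Longrightarrow> cmod w < 1"
    and "(\<lambda>n. poly_shift Q u n) \<longlonglongrightarrow> 0"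
  shows "u \<longlonglongrightarrow> 0"
  using assms
proof (induction "degree Q" arbitrary: Q)
  case 0
  then obtain c where "Q = [:c:]" "c \<noteq> 0"
    by (metis degree_eq_zeroE pCons_0_0)
  have "(\<lambda>n. poly_shift Q u n / c) \<longlonglongrightarrow> 0"
    using "0.prems"(3) by (rule tendsto_divide_zero)
  with \<open>Q = [:c:]\<close> \<open>c \<noteq> 0\<close> show ?case
    by (simp add: poly_shift_pCons)
next
  case (Suc d)
  then have "\<not> constant (poly Q)"
    by (simp add: constant_degree)
  then obtain r where "poly Q r = 0"
    using fundamental_theorem_of_algebra by blast
  then obtain Q' where Q: "Q = [:-r, 1:] * Q'"
    by (metis dvdE poly_eq_0_iff_dvd)
  have "Q' \<noteq> 0"
    using Suc.prems(1) Q by auto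
  have "degree Q' = d"
    using Suc.hyps(2) Q \<open>Q' \<noteq> 0\<close> by (simp add: degree_mult_eq del: mult_pCons_left)
  have "poly_shift Q u = (\<lambda>n. poly_shift Q' u (Suc n) - r * poly_shift Q' u n)"
    by (simp add: Q fun_eq_iff poly_shift_mult poly_shift_pCons del: mult_pCons_left)
  with Suc.prems(3) have "(\<lambda>n. poly_shift Q' u (Suc n) - r * poly_shift Q' u n) \<longlonglongrightarrow> 0"
    by simp
  moreover have "cmod r < 1"
    using Suc.prems(2) \<open>poly Q r = 0\<close> by blast
  ultimately have "(\<lambda>n. poly_shift Q' u n) \<longlonglongrightarrow> 0"
    by (rule first_order_recurrence_tendsto_zero[rotated])
  moreover have "cmod w < 1" if "poly Q' w = 0" for w
    using Suc.prems(2) that by (simp add: Q)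
  ultimately show ?case
    using Suc.hyps(1) \<open>degree Q' = d\<close> \<open>Q' \<noteq> 0\<close> by blast
qed

definition expanded_char_poly :: "(nat \<Rightarrow> real) \<Rightarrow> nat \<Rightarrow> nat \<Rightarrow> complex poly" where
  "expanded_char_poly a k m =
     monom 1 (m + k) - (\<Sum>j<k. monom (of_real (bcoef a k m j)) (k - 1 - j))"

lemma poly_shift_expanded_char_poly:
  "poly_shift (expanded_char_poly a k m) u n =
     u (n + m + k) - (\<Sum>j<k. of_real (bcoef a k m j) * u (n + (k - 1 - j)))"
  by (simp add: expanded_char_poly_def poly_shift_diff poly_shift_sum poly_shift_monom add.assoc)

lemma is_exp_sol_altdef:
  "is_exp_sol a k m z \<longleftrightarrow>
     (\<forall>n. z (n + m + k) = (\<Sum>j<k. bcoef a k m j * z (n + (k - 1 - j))))"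
proof -
  have "(\<Sum>j<k. bcoef a k m j * z (n + m + k - 1 - m - j)) =
      (\<Sum>j<k. bcoef a k m j * z (n + (k - 1 - j)))" for n
    by (rule sum.cong) auto
  then show ?thesis
    by (simp add: is_exp_sol_def)
qed

lemma is_sol_iff_is_exp_sol_0: "is_sol a k x \<longleftrightarrow> is_exp_sol a k 0 x"
  by (simp add: is_sol_def is_exp_sol_def)

lemma poly_shift_expanded_char_poly_eq_0_iff:
  "(\<forall>n. poly_shift (expanded_char_poly a k m) u n = 0) \<longleftrightarrow>
     is_exp_sol a k m (\<lambda>n. Re (u n)) \<and> is_exp_sol a k m (\<lambda>n. Im (u n))"
  by (auto simp: is_exp_sol_altdef poly_shift_expanded_char_poly complex_eq_iff Re_sum Im_sum)

lemma is_exp_sol_iff_poly_shift: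
  "is_exp_sol a k m z \<longleftrightarrow> (\<forall>n. poly_shift (expanded_char_poly a k m) (\<lambda>i. of_real (z i)) n = 0)"
  by (simp add: poly_shift_expanded_char_poly_eq_0_iff is_exp_sol_def)

lemma poly_expanded_char_poly_Suc:
  assumes "k \<ge> 1"
  shows "poly (expanded_char_poly a k (Suc m)) w =
    w * poly (expanded_char_poly a k m) w
    + of_real (bcoef a k m 0) * poly (expanded_char_poly a k 0) w"
proof -
  obtain k' where k': "k = Suc k'"
    using assms by (cases k) auto
  define b where "b j = complex_of_real (bcoef a k m j)" for j
  define f where "f j = w ^ (k - 1 - j)" for j
  have shift: "w * (\<Sum>j<k. b j * f j) = b 0 * w ^ k + (\<Sum>j<k'. b (Suc j) * f j)"
  proof -
    have "w * (\<Sum>j<k. b j * f j) = (\<Sum>j<Suc k'. b j * w ^ (k - j))"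
      unfolding sum_distrib_left k' f_def by (rule sum.cong) (auto simp: Suc_diff_le)
    also have "\<dots> = b 0 * w ^ k + (\<Sum>j<k'. b (Suc j) * f j)"
      by (subst sum.lessThan_Suc_shift) (simp add: k' f_def)
    finally show ?thesis .
  qed
  have "(\<Sum>j<k. of_real (bcoef a k (Suc m) j) * f j) =
      (\<Sum>j<k. b 0 * of_real (a j) * f j + (if j < k' then b (Suc j) * f j else 0))"
    by (rule sum.cong) (auto simp: k' b_def algebra_simps less_Suc_eq)
  also have "\<dots> = b 0 * (\<Sum>j<k. of_real (a j) * f j) + (\<Sum>j<k'. b (Suc j) * f j)"
    by (simp add: sum.distrib sum_distrib_left distrib_left mult.assoc k')
  finally show ?thesis
    using shift
    by (simp add: expanded_char_poly_def poly_sum poly_monom f_def b_def[symmetric] algebra_simps)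
qed

lemma expanded_char_poly_Suc:
  assumes "k \<ge> 1"
  shows "expanded_char_poly a k (Suc m) =
    [:0, 1:] * expanded_char_poly a k m
    + smult (of_real (bcoef a k m 0)) (expanded_char_poly a k 0)"
  by (simp add: poly_eq_poly_eq_iff[symmetric] fun_eq_iff poly_expanded_char_poly_Suc[OF assms])

lemma expanded_char_poly_0_dvd:
  assumes "k \<ge> 1"
  shows "expanded_char_poly a k 0 dvd expanded_char_poly a k m"
  by (induction m) (auto simp: expanded_char_poly_Suc[OF assms] simp del: mult_pCons_left
      intro!: dvd_add dvd_mult dvd_smult)

lemma qpoly_Suc: "qpoly a k (Suc m) w = w * qpoly a k m w + of_real (bcoef a k m 0)"
proof -
  have "w * (\<Sum>i<m. of_real (bcoef a k i 0) * w ^ (m - i - 1)) =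
      (\<Sum>i<m. of_real (bcoef a k i 0) * w ^ (Suc m - i - 1))"
    unfolding sum_distrib_left
  proof (rule sum.cong)
    fix i
    assume "i \<in> {..<m}"
    then have "Suc m - i - 1 = Suc (m - i - 1)"
      by auto
    then show "w * (of_real (bcoef a k i 0) * w ^ (m - i - 1)) =
        of_real (bcoef a k i 0) * w ^ (Suc m - i - 1)"
      by simp
  qed simp
  then show ?thesis
    by (simp add: qpoly_def algebra_simps)
qed

lemma poly_expanded_char_poly:
  assumes "k \<ge> 1"
  shows "poly (expanded_char_poly a k m) w = poly (expanded_char_poly a k 0) w * qpoly a k m w"
proof (induction m)
  case 0
  show ?case
    by (simp add: qpoly_def)
next
  case (Suc m)
  then show ?case
    by (simp add: poly_expanded_char_poly_Suc[OF assms] qpoly_Suc algebra_simps)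
qed

lemma is_exp_sol_if_is_sol:
  assumes "k \<ge> 1" and "is_sol a k x"
  shows "is_exp_sol a k m x"
proof -
  obtain R where R: "expanded_char_poly a k m = R * expanded_char_poly a k 0"
    using expanded_char_poly_0_dvd[OF assms(1)] by (metis dvdE mult.commute)
  have "poly_shift (expanded_char_poly a k 0) (\<lambda>i. of_real (x i)) = (\<lambda>_. 0)"
    using assms(2) by (simp add: fun_eq_iff is_sol_iff_is_exp_sol_0 is_exp_sol_iff_poly_shift)
  then show ?thesis
    by (simp add: is_exp_sol_iff_poly_shift R poly_shift_mult)
qed

lemma norm_less_1_if_char_poly_root:
  assumes "\<forall>x. is_sol a k x \<longrightarrow> x \<longlonglongrightarrow> 0" and "poly (expanded_char_poly a k 0) r = 0"
  shows "cmod r < 1"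
proof (rule ccontr)
  assume "\<not> cmod r < 1"
  have "\<forall>n. poly_shift (expanded_char_poly a k 0) (\<lambda>i. r ^ i) n = 0"
    by (simp add: poly_shift_geometric assms(2))
  then have "is_sol a k (\<lambda>n. Re (r ^ n))" "is_sol a k (\<lambda>n. Im (r ^ n))"
    using poly_shift_expanded_char_poly_eq_0_iff[of a k 0 "\<lambda>i. r ^ i"]
    by (simp_all add: is_sol_iff_is_exp_sol_0)
  then have "(\<lambda>n. r ^ n) \<longlonglongrightarrow> 0"
    using assms(1) by (simp add: tendsto_complex_iff)
  then have "(\<lambda>n. cmod (r ^ n)) \<longlonglongrightarrow> 0"
    by (rule tendsto_norm_zero)
  moreover have "1 \<le> cmod (r ^ n)" for n
    using \<open>\<not> cmod r < 1\<close> by (simp add: norm_power one_le_power)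
  ultimately show False
    using LIMSEQ_le_const[of _ 0 1] by fastforce
qed

lemma is_exp_sol_tendsto_zero:
  assumes "k \<ge> 1" and "is_exp_sol a k m z"
    and "\<And>w. poly (expanded_char_poly a k 0) w = 0 \<Longrightarrow> cmod w < 1"
    and "\<And>w. qpoly a k m w = 0 \<Longrightarrow> cmod w < 1"
  shows "z \<longlonglongrightarrow> 0"
proof -
  have "coeff (expanded_char_poly a k m) (m + k) = 1"
    by (auto simp: expanded_char_poly_def coeff_sum coeff_monom intro!: sum.neutral)
  then have "expanded_char_poly a k m \<noteq> 0"
    by auto
  moreover have "cmod w < 1" if "poly (expanded_char_poly a k m) w = 0" for w
  proof -
    have "poly (expanded_char_poly a k 0) w = 0 \<or> qpoly a k m w = 0"
      using that poly_expanded_char_poly[OF assms(1), of a m w] by simp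
    then show ?thesis
      using assms(3,4) by blast
  qed
  moreover have "poly_shift (expanded_char_poly a k m) (\<lambda>n. of_real (z n)) = (\<lambda>_. 0)"
    using assms(2) by (simp add: fun_eq_iff is_exp_sol_iff_poly_shift)
  ultimately have "(\<lambda>n. complex_of_real (z n)) \<longlonglongrightarrow> 0"
    using tendsto_zero_if_poly_shift_tendsto_zero[of "expanded_char_poly a k m"] by simp
  then have "(\<lambda>n. Re (of_real (z n))) \<longlonglongrightarrow> Re 0"
    by (rule tendsto_Re)
  then show ?thesis
    by simp
qed

theorem mainTheorem6:
  fixes a :: "nat \<Rightarrow> real" and k :: nat
  assumes "k \<ge> 2" and "a 0 \<noteq> 0"
  shows "((\<exists>m. \<forall>z. is_exp_sol a k m z \<longrightarrow> z \<longlonglongrightarrow> 0)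
            \<longrightarrow> (\<forall>x. is_sol a k x \<longrightarrow> x \<longlonglongrightarrow> 0))
       \<and> (\<forall>m. (\<forall>x. is_sol a k x \<longrightarrow> x \<longlonglongrightarrow> 0)
            \<and> (\<forall>w. qpoly a k m w = 0 \<longrightarrow> cmod w < 1)
            \<longrightarrow> (\<forall>z. is_exp_sol a k m z \<longrightarrow> z \<longlonglongrightarrow> 0))"
proof -
  \<comment> \<open>only k \<ge> 1 is used\<close>
  have "k \<ge> 1"
    using assms(1) by simp
  show ?thesis
  proof (intro conjI impI allI)
    fix x
    assume "\<exists>m. \<forall>z. is_exp_sol a k m z \<longrightarrow> z \<longlonglongrightarrow> 0" and "is_sol a k x"
    then show "x \<longlonglongrightarrow> 0"
      using is_exp_sol_if_is_sol[OF \<open>k \<ge> 1\<close>] by blast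
  next
    fix m z
    assume "(\<forall>x. is_sol a k x \<longrightarrow> x \<longlonglongrightarrow> 0) \<and> (\<forall>w. qpoly a k m w = 0 \<longrightarrow> cmod w < 1)"
      and "is_exp_sol a k m z"
    then show "z \<longlonglongrightarrow> 0"
      using is_exp_sol_tendsto_zero[OF \<open>k \<ge> 1\<close>] norm_less_1_if_char_poly_root by blast
  qed
qed

end
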